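(* Let $K$ be a real field, let $R:=\prod_{x\in K}K$ (componentwise operations), regard $K\subseteq R$ via constant functions, and let $E(R)$ be the set of idempotents of $R$. Let $$A:=\Big\{\sum_{i=1}^n e_ix_i: n\in\mathbb N,\ e_i\in E(R),\ x_i\in K\Big\}.$$ Then $A$ is a von Neumann regular Baer ring, $A$ is a proper subring of $R$, and $R$ is the complete ring of quotients of $A$. In particular $A$ is a Baer von Neumann regular ring that is not rationally complete.
   Context: A ring is von Neumann regular if for every $a$ there is $b$ with $a^2b=a$. A commutative ring is Baer if every annihilator ideal is generated by an idempotent. A real field is a field in which $-1$ is not a sum of squares. The complete ring of quotients $Q(A)$ of a commutative ring $A$ is its maximal rational extension; $A$ is rationally complete if $A=Q(A)$. *)

theory Defs
  imports "HOL-Algebra.Ring" "HOL-Algebra.RingHom" "HOL-Algebra.Subrings"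
begin

definition von_neumann_regular :: "('a, 'b) ring_scheme \<Rightarrow> bool" where
  "von_neumann_regular A \<longleftrightarrow> cring A \<and>
     (\<forall>a\<in>carrier A. \<exists>b\<in>carrier A. a \<otimes>\<^bsub>A\<^esub> a \<otimes>\<^bsub>A\<^esub> b = a)"

definition ann :: "('a, 'b) ring_scheme \<Rightarrow> 'a set \<Rightarrow> 'a set" where
  "ann A S = {a \<in> carrier A. \<forall>s\<in>S. a \<otimes>\<^bsub>A\<^esub> s = \<zero>\<^bsub>A\<^esub>}"

definition baer :: "('a, 'b) ring_scheme \<Rightarrow> bool" where
  "baer A \<longleftrightarrow> cring A \<and>
     (\<forall>S \<subseteq> carrier A. \<exists>e\<in>carrier A. e \<otimes>\<^bsub>A\<^esub> e = e \<and>
        ann A S = {e \<otimes>\<^bsub>A\<^esub> a | a. a \<in> carrier A})"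

definition rational_ext ::
    "('a, 'b) ring_scheme \<Rightarrow> ('c, 'd) ring_scheme \<Rightarrow> ('a \<Rightarrow> 'c) \<Rightarrow> bool" where
  "rational_ext A S j \<longleftrightarrow> cring A \<and> cring S \<and> j \<in> ring_hom A S \<and>
     inj_on j (carrier A) \<and>
     (\<forall>s\<in>carrier S. \<forall>t\<in>carrier S. t \<noteq> \<zero>\<^bsub>S\<^esub> \<longrightarrow>
        (\<exists>a\<in>carrier A. j a \<otimes>\<^bsub>S\<^esub> s \<in> j ` carrier A \<and> j a \<otimes>\<^bsub>S\<^esub> t \<noteq> \<zero>\<^bsub>S\<^esub>))"

text \<open>Used with a free type variable 'e in a theorem,
  this expresses maximality with respect to rational extensions of every type.\<close>
definition complete_ring_of_quotients ::
    "('a, 'b) ring_scheme \<Rightarrow> ('c, 'd) ring_scheme \<Rightarrow> ('a \<Rightarrow> 'c) \<Rightarrow> 'e itself \<Rightarrow> bool" where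
  "complete_ring_of_quotients A Q i (T :: 'e itself) \<longleftrightarrow> rational_ext A Q i \<and>
     (\<forall>(S :: 'e ring) j. rational_ext A S j \<longrightarrow>
        (\<exists>h. h \<in> ring_hom S Q \<and> inj_on h (carrier S) \<and> (\<forall>a\<in>carrier A. h (j a) = i a)))"

definition rationally_complete :: "('a, 'b) ring_scheme \<Rightarrow> 'e itself \<Rightarrow> bool" where
  "rationally_complete A (T :: 'e itself) \<longleftrightarrow>
     (\<forall>(S :: 'e ring) j. rational_ext A S j \<longrightarrow> j ` carrier A = carrier S)"

definition real_field :: "'a::field itself \<Rightarrow> bool" where
  "real_field T \<longleftrightarrow> (\<forall>xs :: 'a list. (\<Sum>x\<leftarrow>xs. x ^ 2) \<noteq> - 1)"

definition prodR :: "('a::field \<Rightarrow> 'a) ring" where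
  "prodR = \<lparr>carrier = UNIV, mult = (\<lambda>f g y. f y * g y), one = (\<lambda>y. 1),
            zero = (\<lambda>y. 0), add = (\<lambda>f g y. f y + g y)\<rparr>"

definition idemR :: "('a::field \<Rightarrow> 'a) set" where
  "idemR = {e. \<forall>y. e y * e y = e y}"

definition Aset :: "('a::field \<Rightarrow> 'a) set" where
  "Aset = {(\<lambda>y. \<Sum>i<n. e i y * c i) | (n::nat) e c. \<forall>i<n. e i \<in> idemR}"

definition Aring :: "('a::field \<Rightarrow> 'a) ring" where
  "Aring = prodR\<lparr>carrier := Aset\<rparr>"

end

theory Submission
  imports Defs "HOL-Algebra.QuotRing"
begin

(* The ring A of finite sums of idempotents times constants is exactly
   the ring of functions K -> K with finite range (lemma Aset_eq).  With this
   description the ring-theoretic properties become pointwise arguments: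
   - A is a subring of R, since pointwise operations preserve finite range;
   - A is von Neumann regular: b = (y |-> a(y)^-1) works, using inverse 0 = 0;
   - A is Baer: the annihilator of S is generated by the indicator function of the
     common zero set of S;
   - A is proper: a real field has characteristic 0, hence is infinite, so the
     identity function does not have finite range.
   The point indicators delta y0 lie in A.  They show that R is a rational extension
   of A, and they drive maximality: in any rational extension S of A (via j), every
   product j(delta y0) * s again lies in j(A), and the map sending s to the function
   y0 |-> (j^-1 (j(delta y0) * s))(y0) is an injective ring homomorphism S -> R over A.
   Properness together with R being a rational extension shows that A is not
   rationally complete. *)

lemma prodR_simps [simp]:
  "carrier prodR = UNIV" "mult prodR = (\<lambda>f g y. f y * g y)" "one prodR = (\<lambda>y. 1)"
  "zero prodR = (\<lambda>y. 0)" "add prodR = (\<lambda>f g y. f y + g y)"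
  by (simp_all add: prodR_def)

lemma Aring_simps [simp]:
  "carrier Aring = Aset" "mult Aring = (\<lambda>f g y. f y * g y)" "one Aring = (\<lambda>y. 1)"
  "zero Aring = (\<lambda>y. 0)" "add Aring = (\<lambda>f g y. f y + g y)"
  by (simp_all add: Aring_def prodR_def)

lemma cring_prodR: "cring (prodR :: ('a::field \<Rightarrow> 'a) ring)"
proof (rule cringI)
  show "abelian_group (prodR :: ('a \<Rightarrow> 'a) ring)"
  proof (rule abelian_groupI)
    fix f :: "'a \<Rightarrow> 'a"
    show "\<exists>g\<in>carrier prodR. g \<oplus>\<^bsub>prodR\<^esub> f = \<zero>\<^bsub>prodR\<^esub>"
      by (intro bexI[of _ "\<lambda>y. - f y"]) auto
  qed (auto simp: fun_eq_iff algebra_simps)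
  show "comm_monoid (prodR :: ('a \<Rightarrow> 'a) ring)"
    by (rule comm_monoidI) (auto simp: fun_eq_iff algebra_simps)
qed (auto simp: fun_eq_iff algebra_simps)

lemma prodR_minus [simp]: "\<ominus>\<^bsub>(prodR :: ('a::field \<Rightarrow> 'a) ring)\<^esub> f = (\<lambda>y. - f y)"
proof -
  interpret cring "prodR :: ('a \<Rightarrow> 'a) ring" by (rule cring_prodR)
  show ?thesis by (rule minus_equality) (auto simp: fun_eq_iff)
qed

section \<open>A is the ring of functions with finite range\<close>

lemma finite_range_comp:
  "finite (range f) \<Longrightarrow> finite (range (\<lambda>y. h (f y)))"
  using finite_imageI[of "range f" h] by (simp add: image_image)

lemma finite_range_bin:
  assumes "finite (range f)" "finite (range g)"
  shows "finite (range (\<lambda>y. h (f y) (g y)))"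
proof -
  have "range (\<lambda>y. h (f y) (g y)) \<subseteq> case_prod h ` (range f \<times> range g)" by auto
  then show ?thesis using assms finite_subset by blast
qed

lemma idemR_values: "e \<in> idemR \<Longrightarrow> e y = 0 \<or> e y = (1::'a::field)"
  by (auto simp: idemR_def)

lemma finite_range_idem_combination:
  fixes c :: "nat \<Rightarrow> 'a::field"
  assumes "\<forall>i<n. e i \<in> idemR"
  shows "finite (range (\<lambda>y. \<Sum>i<n. e i y * c i))"
  using assms
proof (induction n)
  case (Suc n)
  have ih: "finite (range (\<lambda>y. \<Sum>i<n. e i y * c i))" using Suc by simp
  have "range (e n) \<subseteq> {0, 1}" using Suc.prems idemR_values by blast
  then have last: "finite (range (\<lambda>y. e n y * c n))"
    using finite_range_comp[of "e n" "\<lambda>t. t * c n"] finite_subset by blast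
  show ?case using finite_range_bin[OF ih last, of "(+)"] by simp
qed simp

text \<open>Conversely a function with finite range is the sum, over its values v, of the
  indicator of the fibre over v times the constant v.\<close>

lemma finite_range_in_Aset:
  fixes f :: "'a::field \<Rightarrow> 'a"
  assumes fin: "finite (range f)"
  shows "f \<in> Aset"
proof -
  obtain g where g: "bij_betw g {..<card (range f)} (range f)"
    using ex_bij_betw_nat_finite[OF fin] atLeast0LessThan by auto
  define e where "e = (\<lambda>i y. if f y = g i then (1::'a) else 0)"
  have "\<forall>i<card (range f). e i \<in> idemR" by (auto simp: e_def idemR_def)
  moreover have "f = (\<lambda>y. \<Sum>i<card (range f). e i y * g i)"
  proof
    fix y
    have "(\<Sum>i<card (range f). e i y * g i) = (\<Sum>v\<in>range f. (if f y = v then 1 else 0) * v)"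
      unfolding e_def using sum.reindex_bij_betw[OF g, of "\<lambda>v. (if f y = v then 1 else 0) * v"]
      by simp
    also have "\<dots> = (\<Sum>v\<in>range f. if f y = v then v else 0)" by (rule sum.cong) auto
    also have "\<dots> = f y" using fin by (simp add: sum.delta)
    finally show "f y = (\<Sum>i<card (range f). e i y * g i)" by simp
  qed
  ultimately show "f \<in> Aset" unfolding Aset_def by blast
qed

lemma Aset_eq: "(Aset :: ('a::field \<Rightarrow> 'a) set) = {f. finite (range f)}"
  using finite_range_idem_combination finite_range_in_Aset by (auto simp: Aset_def)

lemma Aset_if_range_subset: "range f \<subseteq> F \<Longrightarrow> finite F \<Longrightarrow> (f :: 'a::field \<Rightarrow> 'a) \<in> Aset"
  by (simp add: Aset_eq finite_subset)

lemma Aset_mult: "a \<in> Aset \<Longrightarrow> b \<in> Aset \<Longrightarrow> (\<lambda>y. a y * b y) \<in> (Aset :: ('a::field \<Rightarrow> 'a) set)"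
  by (simp add: Aset_eq finite_range_bin)

lemma Aset_add: "a \<in> Aset \<Longrightarrow> b \<in> Aset \<Longrightarrow> (\<lambda>y. a y + b y) \<in> (Aset :: ('a::field \<Rightarrow> 'a) set)"
  by (simp add: Aset_eq finite_range_bin)

section \<open>A is a von Neumann regular Baer subring of R\<close>

lemma subring_Aset: "subring (Aset :: ('a::field \<Rightarrow> 'a) set) prodR"
proof -
  interpret cring "prodR :: ('a \<Rightarrow> 'a) ring" by (rule cring_prodR)
  show ?thesis
  proof (rule subringI)
    show "\<one>\<^bsub>prodR\<^esub> \<in> (Aset :: ('a \<Rightarrow> 'a) set)" by (simp add: Aset_eq image_def)
  qed (simp_all add: Aset_eq finite_range_bin finite_range_comp)
qed

lemma cring_Aring: "cring (Aring :: ('a::field \<Rightarrow> 'a) ring)"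
proof -
  interpret cring "prodR :: ('a \<Rightarrow> 'a) ring" by (rule cring_prodR)
  have "subcring (Aset :: ('a \<Rightarrow> 'a) set) prodR" by (rule subcringI'[OF subring_Aset])
  then show ?thesis unfolding Aring_def by (subst subcring_iff[symmetric]) auto
qed

text \<open>The pointwise inverse is a quasi-inverse, because inverse 0 = 0 in HOL fields.\<close>

lemma von_neumann_regular_Aring: "von_neumann_regular (Aring :: ('a::field \<Rightarrow> 'a) ring)"
  unfolding von_neumann_regular_def
proof (intro conjI cring_Aring ballI)
  fix a :: "'a \<Rightarrow> 'a" assume "a \<in> carrier Aring"
  then have "(\<lambda>y. inverse (a y)) \<in> Aset" by (simp add: Aset_eq finite_range_comp)
  moreover have "a \<otimes>\<^bsub>Aring\<^esub> a \<otimes>\<^bsub>Aring\<^esub> (\<lambda>y. inverse (a y)) = a"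
    by (auto simp: fun_eq_iff field_simps)
  ultimately show "\<exists>b\<in>carrier Aring. a \<otimes>\<^bsub>Aring\<^esub> a \<otimes>\<^bsub>Aring\<^esub> b = a" by auto
qed

text \<open>The annihilator of S consists of the functions of A vanishing outside the common
  zero set Z of S, i.e. it is generated by the indicator idempotent of Z.\<close>

lemma baer_Aring: "baer (Aring :: ('a::field \<Rightarrow> 'a) ring)"
  unfolding baer_def
proof (intro conjI cring_Aring allI impI)
  fix S :: "('a \<Rightarrow> 'a) set"
  define e :: "'a \<Rightarrow> 'a" where "e = (\<lambda>y. if \<forall>s\<in>S. s y = 0 then 1 else 0)"
  have eA: "e \<in> Aset" by (rule Aset_if_range_subset[of _ "{0, 1}"]) (auto simp: e_def)
  have "ann Aring S = {e \<otimes>\<^bsub>Aring\<^esub> a | a. a \<in> carrier Aring}"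
  proof (intro subset_antisym subsetI)
    fix a assume "a \<in> ann Aring S"
    then have a: "a \<in> Aset" "\<And>s y. s \<in> S \<Longrightarrow> a y * s y = 0"
      by (auto simp: ann_def fun_eq_iff)
    have "a y = e y * a y" for y
      using a(2)[of _ y] by (auto simp: e_def)
    then have "a = e \<otimes>\<^bsub>Aring\<^esub> a" by (simp add: fun_eq_iff)
    then show "a \<in> {e \<otimes>\<^bsub>Aring\<^esub> a | a. a \<in> carrier Aring}" using a by auto
  next
    fix x assume "x \<in> {e \<otimes>\<^bsub>Aring\<^esub> a | a. a \<in> carrier Aring}"
    then obtain a where a: "a \<in> Aset" "x = (\<lambda>y. e y * a y)" by auto
    then have "x \<in> Aset" using Aset_mult[OF eA a(1)] by simp
    then show "x \<in> ann Aring S" by (auto simp: ann_def e_def a(2) fun_eq_iff)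
  qed
  moreover have "e \<otimes>\<^bsub>Aring\<^esub> e = e" by (auto simp: e_def fun_eq_iff)
  ultimately show "\<exists>e\<in>carrier Aring. e \<otimes>\<^bsub>Aring\<^esub> e = e \<and>
      ann Aring S = {e \<otimes>\<^bsub>Aring\<^esub> a | a. a \<in> carrier Aring}"
    using eA by auto
qed

section \<open>A is a proper subring when K is a real field\<close>

text \<open>In a real field no positive integer vanishes: otherwise k + 1 = 0 would exhibit
  -1 = k as a sum of k squares 1.\<close>

lemma real_field_of_nat_Suc_neq_0:
  assumes "real_field TYPE('a::field)"
  shows "(of_nat (Suc k) :: 'a) \<noteq> 0"
proof
  assume k: "(of_nat (Suc k) :: 'a) = 0"
  have "(\<Sum>x\<leftarrow>replicate k (1::'a). x ^ 2) = of_nat k" by (simp add: sum_list_replicate)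
  also have "\<dots> = -1" using k by (simp add: eq_neg_iff_add_eq_0 add.commute)
  finally show False using assms unfolding real_field_def by blast
qed

text \<open>Hence a real field has characteristic 0 and is infinite.\<close>

lemma real_field_infinite:
  assumes "real_field TYPE('a::field)"
  shows "infinite (UNIV :: 'a set)"
proof -
  have "inj (of_nat :: nat \<Rightarrow> 'a)"
  proof (rule linorder_injI)
    fix m n :: nat assume "m < n"
    then have "(of_nat n :: 'a) - of_nat m = of_nat (Suc (n - Suc m))"
      by (simp add: Suc_diff_Suc)
    then show "(of_nat m :: 'a) \<noteq> of_nat n"
      using real_field_of_nat_Suc_neq_0[OF assms] by (metis eq_iff_diff_eq_0)
  qed
  then show ?thesis using infinite_UNIV_nat finite_imageD finite_subset subset_UNIV by metis
qed

text \<open>The identity function K -> K has infinite range, so it lies in R but not in A.\<close>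

lemma Aset_proper:
  assumes "real_field TYPE('a::field)"
  shows "(Aset :: ('a \<Rightarrow> 'a) set) \<noteq> carrier prodR"
proof
  assume "(Aset :: ('a \<Rightarrow> 'a) set) = carrier prodR"
  then have "(\<lambda>x::'a. x) \<in> Aset" by simp
  then show False using real_field_infinite[OF assms] by (simp add: Aset_eq)
qed

section \<open>R is a rational extension of A\<close>

definition delta :: "'a::field \<Rightarrow> 'a \<Rightarrow> 'a" where
  "delta y0 = (\<lambda>y. if y = y0 then 1 else 0)"

lemma point_function_in_Aset: "(\<lambda>y. if y = y0 then c else (0::'a::field)) \<in> Aset"
  by (rule Aset_if_range_subset[of _ "{0, c}"]) auto

lemma delta_in_Aset: "delta y0 \<in> Aset"
  unfolding delta_def by (rule point_function_in_Aset)

text \<open>Given t \<noteq> 0, pick y0 with t(y0) \<noteq> 0; then delta y0 * s is a point function in A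
  and delta y0 * t \<noteq> 0.\<close>

lemma rational_ext_prodR: "rational_ext (Aring :: ('a::field \<Rightarrow> 'a) ring) prodR id"
  unfolding rational_ext_def
proof (intro conjI cring_Aring cring_prodR ballI impI)
  show "id \<in> ring_hom (Aring :: ('a \<Rightarrow> 'a) ring) prodR"
    by (rule ring_hom_memI) auto
  show "inj_on id (carrier (Aring :: ('a \<Rightarrow> 'a) ring))" by simp
  fix s t :: "'a \<Rightarrow> 'a" assume "t \<noteq> \<zero>\<^bsub>prodR\<^esub>"
  then obtain y0 where y0: "t y0 \<noteq> 0" by (auto simp: fun_eq_iff)
  have "delta y0 \<otimes>\<^bsub>prodR\<^esub> s = (\<lambda>y. if y = y0 then s y0 else 0)"
    by (auto simp: delta_def fun_eq_iff)
  then have "id (delta y0) \<otimes>\<^bsub>prodR\<^esub> s \<in> id ` carrier Aring"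
    using point_function_in_Aset by simp
  moreover have "id (delta y0) \<otimes>\<^bsub>prodR\<^esub> t \<noteq> \<zero>\<^bsub>prodR\<^esub>"
    using y0 by (auto simp: delta_def fun_eq_iff)
  ultimately show "\<exists>a\<in>carrier Aring. id a \<otimes>\<^bsub>prodR\<^esub> s \<in> id ` carrier Aring \<and>
      id a \<otimes>\<^bsub>prodR\<^esub> t \<noteq> \<zero>\<^bsub>prodR\<^esub>"
    using delta_in_Aset by auto
qed

section \<open>Every rational extension of A embeds into R over A\<close>

locale rational_ext_of_A =
  fixes S :: "'e ring" and j :: "('a::field \<Rightarrow> 'a) \<Rightarrow> 'e"
  assumes rat: "rational_ext (Aring :: ('a \<Rightarrow> 'a) ring) S j"
begin

sublocale S: cring S
  using rat by (simp add: rational_ext_def)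

lemma j_hom: "j \<in> ring_hom (Aring :: ('a \<Rightarrow> 'a) ring) S"
  using rat by (simp add: rational_ext_def)

lemma j_inj: "a \<in> Aset \<Longrightarrow> b \<in> Aset \<Longrightarrow> j a = j b \<Longrightarrow> a = b"
  using rat by (auto simp: rational_ext_def dest: inj_onD)

lemma j_dense:
  "s \<in> carrier S \<Longrightarrow> t \<in> carrier S \<Longrightarrow> t \<noteq> \<zero>\<^bsub>S\<^esub> \<Longrightarrow>
     \<exists>a\<in>Aset. j a \<otimes>\<^bsub>S\<^esub> s \<in> j ` Aset \<and> j a \<otimes>\<^bsub>S\<^esub> t \<noteq> \<zero>\<^bsub>S\<^esub>"
  using rat by (simp add: rational_ext_def)

lemma j_closed: "a \<in> Aset \<Longrightarrow> j a \<in> carrier S"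
  using ring_hom_closed[OF j_hom] by simp

lemma j_mult: "a \<in> Aset \<Longrightarrow> b \<in> Aset \<Longrightarrow> j (\<lambda>y. a y * b y) = j a \<otimes>\<^bsub>S\<^esub> j b"
  using ring_hom_mult[OF j_hom] by simp

lemma j_add: "a \<in> Aset \<Longrightarrow> b \<in> Aset \<Longrightarrow> j (\<lambda>y. a y + b y) = j a \<oplus>\<^bsub>S\<^esub> j b"
  using ring_hom_add[OF j_hom] by simp

lemma j_one: "j (\<lambda>y. 1) = \<one>\<^bsub>S\<^esub>"
  using ring_hom_one[OF j_hom] by simp

lemma j_zero: "j (\<lambda>y. 0) = \<zero>\<^bsub>S\<^esub>"
  using ring_hom_zero[OF j_hom cring.axioms(1)[OF cring_Aring] S.ring_axioms] by simp

lemma j_eq_zero_iff: "a \<in> Aset \<Longrightarrow> j a = \<zero>\<^bsub>S\<^esub> \<longleftrightarrow> a = (\<lambda>y. 0)"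
  using j_inj[of a "\<lambda>y. 0"] j_zero point_function_in_Aset[of _ 0] by auto

text \<open>Density yields a with
  j(a) s = j(c) and j(a) j(delta y0) \<noteq> 0, so a(y0) \<noteq> 0, and delta y0 = d a for the
  point function d with value 1/a(y0) at y0; hence j(delta y0) s = j(d c).\<close>

lemma delta_times_in_image:
  assumes s: "s \<in> carrier S"
  shows "\<exists>b\<in>Aset. j (delta y0) \<otimes>\<^bsub>S\<^esub> s = j b"
proof -
  have "j (delta y0) \<noteq> \<zero>\<^bsub>S\<^esub>"
    using j_eq_zero_iff[OF delta_in_Aset] by (auto simp: delta_def fun_eq_iff)
  then obtain a where a: "a \<in> Aset" "j a \<otimes>\<^bsub>S\<^esub> s \<in> j ` Aset"
      "j a \<otimes>\<^bsub>S\<^esub> j (delta y0) \<noteq> \<zero>\<^bsub>S\<^esub>"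
    using j_dense[OF s j_closed[OF delta_in_Aset]] by blast
  obtain c where c: "c \<in> Aset" "j a \<otimes>\<^bsub>S\<^esub> s = j c" using a(2) by auto
  have "a y0 \<noteq> 0"
  proof
    assume "a y0 = 0"
    then have "(\<lambda>y. a y * delta y0 y) = (\<lambda>y. 0)" by (auto simp: delta_def fun_eq_iff)
    then have "j a \<otimes>\<^bsub>S\<^esub> j (delta y0) = \<zero>\<^bsub>S\<^esub>"
      using j_mult[OF a(1) delta_in_Aset[of y0]] j_zero by simp
    with a(3) show False by simp
  qed
  define d where "d = (\<lambda>y. if y = y0 then inverse (a y0) else 0)"
  have dA: "d \<in> Aset" unfolding d_def by (rule point_function_in_Aset)
  have "delta y0 = (\<lambda>y. d y * a y)"
    using \<open>a y0 \<noteq> 0\<close> by (auto simp: d_def delta_def fun_eq_iff)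
  then have "j (delta y0) \<otimes>\<^bsub>S\<^esub> s = (j d \<otimes>\<^bsub>S\<^esub> j a) \<otimes>\<^bsub>S\<^esub> s"
    using j_mult[OF dA a(1)] by simp
  also have "\<dots> = j d \<otimes>\<^bsub>S\<^esub> j c" using c S.m_assoc j_closed dA a(1) s by simp
  also have "\<dots> = j (\<lambda>y. d y * c y)" using j_mult[OF dA c(1)] by simp
  finally show ?thesis using Aset_mult[OF dA c(1)] by blast
qed

definition coord :: "'e \<Rightarrow> 'a \<Rightarrow> 'a \<Rightarrow> 'a" where
  "coord s y0 = (THE b. b \<in> Aset \<and> j (delta y0) \<otimes>\<^bsub>S\<^esub> s = j b)"

lemma coord:
  assumes "s \<in> carrier S"
  shows "coord s y0 \<in> Aset \<and> j (delta y0) \<otimes>\<^bsub>S\<^esub> s = j (coord s y0)"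
proof -
  obtain b where b: "b \<in> Aset" "j (delta y0) \<otimes>\<^bsub>S\<^esub> s = j b"
    using delta_times_in_image[OF assms, of y0] by blast
  then have "\<exists>!b. b \<in> Aset \<and> j (delta y0) \<otimes>\<^bsub>S\<^esub> s = j b"
    by (intro ex1I[of _ b]) (auto intro: j_inj)
  then show ?thesis unfolding coord_def by (rule theI')
qed

lemma coord_eqI:
  "s \<in> carrier S \<Longrightarrow> b \<in> Aset \<Longrightarrow> j (delta y0) \<otimes>\<^bsub>S\<^esub> s = j b \<Longrightarrow> coord s y0 = b"
  using coord[of s y0] j_inj[of "coord s y0" b] by metis

definition embed :: "'e \<Rightarrow> 'a \<Rightarrow> 'a" where
  "embed s = (\<lambda>y0. coord s y0 y0)"

text \<open>j(delta y0) is idempotent, which makes the coordinate map multiplicative.\<close>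

lemma j_delta_idem: "j (delta y0) \<otimes>\<^bsub>S\<^esub> j (delta y0) = j (delta y0)"
proof -
  have "(\<lambda>y. delta y0 y * delta y0 y) = delta y0" by (auto simp: delta_def)
  then show ?thesis using j_mult[OF delta_in_Aset delta_in_Aset, of y0 y0] by (simp only:)
qed

text \<open>embed is additive and multiplicative because multiplication by the idempotent
  j(delta y0) is, and it restricts to the identity on A.\<close>

lemma embed_mult:
  assumes x: "x \<in> carrier S" and y: "y \<in> carrier S"
  shows "embed (x \<otimes>\<^bsub>S\<^esub> y) = (\<lambda>z. embed x z * embed y z)"
proof
  fix y0
  let ?d = "j (delta y0)"
  have d: "?d \<in> carrier S" by (rule j_closed[OF delta_in_Aset])
  have cx: "coord x y0 \<in> Aset" and jx: "?d \<otimes>\<^bsub>S\<^esub> x = j (coord x y0)"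
    using coord[OF x] by auto
  have cy: "coord y y0 \<in> Aset" and jy: "?d \<otimes>\<^bsub>S\<^esub> y = j (coord y y0)"
    using coord[OF y] by auto
  have "?d \<otimes>\<^bsub>S\<^esub> (x \<otimes>\<^bsub>S\<^esub> y) = (?d \<otimes>\<^bsub>S\<^esub> ?d) \<otimes>\<^bsub>S\<^esub> (x \<otimes>\<^bsub>S\<^esub> y)"
    by (simp add: j_delta_idem)
  also have "\<dots> = (?d \<otimes>\<^bsub>S\<^esub> x) \<otimes>\<^bsub>S\<^esub> (?d \<otimes>\<^bsub>S\<^esub> y)" using d x y by (simp add: S.m_ac)
  also have "\<dots> = j (\<lambda>z. coord x y0 z * coord y y0 z)" using jx jy j_mult[OF cx cy] by simp
  finally have "coord (x \<otimes>\<^bsub>S\<^esub> y) y0 = (\<lambda>z. coord x y0 z * coord y y0 z)"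
    by (rule coord_eqI[OF S.m_closed[OF x y] Aset_mult[OF cx cy]])
  then show "embed (x \<otimes>\<^bsub>S\<^esub> y) y0 = embed x y0 * embed y y0" by (simp add: embed_def)
qed

lemma embed_add:
  assumes x: "x \<in> carrier S" and y: "y \<in> carrier S"
  shows "embed (x \<oplus>\<^bsub>S\<^esub> y) = (\<lambda>z. embed x z + embed y z)"
proof
  fix y0
  let ?d = "j (delta y0)"
  have d: "?d \<in> carrier S" by (rule j_closed[OF delta_in_Aset])
  have cx: "coord x y0 \<in> Aset" and jx: "?d \<otimes>\<^bsub>S\<^esub> x = j (coord x y0)"
    using coord[OF x] by auto
  have cy: "coord y y0 \<in> Aset" and jy: "?d \<otimes>\<^bsub>S\<^esub> y = j (coord y y0)"
    using coord[OF y] by auto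
  have "?d \<otimes>\<^bsub>S\<^esub> (x \<oplus>\<^bsub>S\<^esub> y) = (?d \<otimes>\<^bsub>S\<^esub> x) \<oplus>\<^bsub>S\<^esub> (?d \<otimes>\<^bsub>S\<^esub> y)"
    using d x y by (simp add: S.r_distr)
  also have "\<dots> = j (\<lambda>z. coord x y0 z + coord y y0 z)" using jx jy j_add[OF cx cy] by simp
  finally have "coord (x \<oplus>\<^bsub>S\<^esub> y) y0 = (\<lambda>z. coord x y0 z + coord y y0 z)"
    by (rule coord_eqI[OF S.a_closed[OF x y] Aset_add[OF cx cy]])
  then show "embed (x \<oplus>\<^bsub>S\<^esub> y) y0 = embed x y0 + embed y y0" by (simp add: embed_def)
qed

lemma embed_j: "a \<in> Aset \<Longrightarrow> embed (j a) = a"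
proof
  fix y0 assume a: "a \<in> Aset"
  have "coord (j a) y0 = (\<lambda>z. delta y0 z * a z)"
    by (rule coord_eqI[OF j_closed[OF a] Aset_mult[OF delta_in_Aset a] j_mult[OF delta_in_Aset a, symmetric]])
  then show "embed (j a) y0 = a y0" by (simp add: embed_def delta_def)
qed

lemma embed_hom: "embed \<in> ring_hom S prodR"
proof (rule ring_hom_memI)
  show "embed \<one>\<^bsub>S\<^esub> = \<one>\<^bsub>prodR\<^esub>"
    using embed_j[of "\<lambda>y. 1"] j_one subringE(3)[OF subring_Aset] by simp
qed (simp_all add: embed_mult embed_add)

text \<open>Only 0 is sent to 0: for u \<noteq> 0 density gives a with j(a) u = j(c), c(y0) \<noteq> 0;
  multiplying by j(delta y0) yields c(y0) = a(y0) embed(u)(y0).\<close>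

lemma embed_eq_zero:
  assumes u: "u \<in> carrier S" and eu: "embed u = (\<lambda>z. 0)"
  shows "u = \<zero>\<^bsub>S\<^esub>"
proof (rule ccontr)
  assume "u \<noteq> \<zero>\<^bsub>S\<^esub>"
  then obtain a c where a: "a \<in> Aset" and c: "c \<in> Aset" "j a \<otimes>\<^bsub>S\<^esub> u = j c"
      and "j a \<otimes>\<^bsub>S\<^esub> u \<noteq> \<zero>\<^bsub>S\<^esub>"
    using j_dense[OF u u] by blast
  then obtain y0 where y0: "c y0 \<noteq> 0" using j_eq_zero_iff by (auto simp: fun_eq_iff)
  let ?d = "j (delta y0)"
  have cu: "coord u y0 \<in> Aset" and ju: "?d \<otimes>\<^bsub>S\<^esub> u = j (coord u y0)"
    using coord[OF u] by auto
  have "j (\<lambda>z. delta y0 z * c z) = ?d \<otimes>\<^bsub>S\<^esub> (j a \<otimes>\<^bsub>S\<^esub> u)"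
    using j_mult[OF delta_in_Aset c(1)] c by simp
  also have "\<dots> = j a \<otimes>\<^bsub>S\<^esub> (?d \<otimes>\<^bsub>S\<^esub> u)"
    using S.m_lcomm[OF j_closed[OF delta_in_Aset] j_closed[OF a] u] .
  also have "\<dots> = j (\<lambda>z. a z * coord u y0 z)"
    using ju j_mult[OF a cu] by simp
  finally have eq: "(\<lambda>z. delta y0 z * c z) = (\<lambda>z. a z * coord u y0 z)"
    by (rule j_inj[OF Aset_mult[OF delta_in_Aset c(1)] Aset_mult[OF a cu]])
  have "c y0 = a y0 * embed u y0"
    using fun_cong[OF eq, of y0] by (simp add: embed_def delta_def)
  then show False using eu y0 by simp
qed

lemma embedding_over_A:
  "\<exists>h. h \<in> ring_hom S prodR \<and> inj_on h (carrier S) \<and> (\<forall>a\<in>carrier Aring. h (j a) = id a)"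
proof (intro exI[of _ embed] conjI ballI)
  interpret h: ring_hom_ring S prodR embed
    by (rule ring_hom_ringI2[OF S.ring_axioms cring.axioms(1)[OF cring_prodR] embed_hom])
  have "a_kernel S prodR embed = {\<zero>\<^bsub>S\<^esub>}"
  proof (intro equalityI subsetI)
    fix u assume "u \<in> a_kernel S prodR embed"
    then have "u \<in> carrier S" "embed u = (\<lambda>z. 0)" unfolding a_kernel_def' by auto
    then show "u \<in> {\<zero>\<^bsub>S\<^esub>}" using embed_eq_zero by blast
  qed (unfold a_kernel_def', use h.hom_zero in auto)
  then show "inj_on embed (carrier S)" by (rule h.trivial_ker_imp_inj)
qed (simp_all add: embed_hom embed_j)

end

theorem mainTheorem10:
  assumes "real_field TYPE('a::field)"
  shows "von_neumann_regular (Aring :: ('a \<Rightarrow> 'a) ring)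
       \<and> baer (Aring :: ('a \<Rightarrow> 'a) ring)
       \<and> subring (Aset :: ('a \<Rightarrow> 'a) set) prodR
       \<and> (Aset :: ('a \<Rightarrow> 'a) set) \<noteq> carrier prodR
       \<and> complete_ring_of_quotients (Aring :: ('a \<Rightarrow> 'a) ring) (prodR :: ('a \<Rightarrow> 'a) ring) id TYPE('e)
       \<and> \<not> rationally_complete (Aring :: ('a \<Rightarrow> 'a) ring) TYPE('a \<Rightarrow> 'a)"
proof -
  have proper: "(Aset :: ('a \<Rightarrow> 'a) set) \<noteq> carrier prodR"
    by (rule Aset_proper[OF assms])
  have "complete_ring_of_quotients (Aring :: ('a \<Rightarrow> 'a) ring) (prodR :: ('a \<Rightarrow> 'a) ring) id TYPE('e)"
    unfolding complete_ring_of_quotients_def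
  proof (intro conjI allI impI rational_ext_prodR)
    fix S :: "'e ring" and j assume "rational_ext (Aring :: ('a \<Rightarrow> 'a) ring) S j"
    then show "\<exists>h. h \<in> ring_hom S prodR \<and> inj_on h (carrier S) \<and> (\<forall>a\<in>carrier Aring. h (j a) = id a)"
      by (intro rational_ext_of_A.embedding_over_A rational_ext_of_A.intro)
  qed
  moreover have "\<not> rationally_complete (Aring :: ('a \<Rightarrow> 'a) ring) TYPE('a \<Rightarrow> 'a)"
    unfolding rationally_complete_def
  proof
    assume "\<forall>(S :: ('a \<Rightarrow> 'a) ring) j. rational_ext (Aring :: ('a \<Rightarrow> 'a) ring) S j \<longrightarrow>
        j ` carrier Aring = carrier S"
    from this[rule_format, OF rational_ext_prodR] proper show False by simp
  qed
  ultimately show ?thesis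
    using von_neumann_regular_Aring baer_Aring subring_Aset proper by blast
qed

end
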